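(* Let $\mathbf f=(M,\mathscr L,\lambda,\kappa,\theta,\Omega)$ be an additive frame. Then $\mathbf f$ is an additive$^+$ frame (i.e. $|M|\ge\lambda$) if and only if for each $\varepsilon\in(0,\theta)$ there exists $\bar a\in{}^\varepsilon M$ such that $\varphi_{\bar a}(M)$ has cardinality $\ge\lambda$.
   Context: A general frame is a tuple $\mathbf f=(M,\mathscr L,\lambda,\kappa,\theta,\Omega)$ where: (1) $M$ is a $\tau_M$-model; (2) $\mathscr L$ is a class of infinitary formulas in vocabulary $\tau_M$ (built using conjunctions, disjunctions and quantifiers $\exists^\sigma,\forall^\sigma$, $\sigma\in\Omega$, where $\exists^\sigma\bar x'$ asserts existence of $\sigma$ pairwise distinct witnesses), each of the form $\varphi(\bar x)$ with $\lg(\bar x)<\theta$, and $\mathscr L$ is closed under permuting variables, adding dummy variables and finite conjunctions; for such $\varphi$, $\varphi(M)=\{\bar a: M\models\varphi[\bar a]\}$; (3) for every $\varepsilon<\theta$ and $\bar a\in{}^\varepsilon M$ there is $\varphi_{\bar a}(\bar x)\in\mathscr L$ with $\bar a\in\varphi_{\bar a}(M)$ and $\varphi_{\bar a}(M)\subseteq\psi(M)$ whenever $\psi(\bar x)\in\mathscr L$ and $\bar a\in\psi(M)$; (4)(a) if $\varphi_\alpha(\bar x)\in\mathscr L$ for $\alpha<\kappa$ then $\varphi_\alpha(M)\supseteq\varphi_\beta(M)$ for some $\alpha<\beta<\kappa$; (4)(b) if $\varphi_{\alpha,\beta}(\bar x,\bar y)\in\mathscr L$ for $\alpha<\beta<\lambda$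 then there are $\alpha_1<\alpha_2<\alpha_3<\lambda$ with $\varphi_{\alpha_1,\alpha_2}(M)\supseteq\varphi_{\alpha_1,\alpha_3}(M)$ and $\varphi_{\alpha_1,\alpha_2}(M)\supseteq\varphi_{\alpha_2,\alpha_3}(M)$; (5) $\lambda,\kappa$ are regular, $\lambda\ge\kappa\ge\theta\ge|\Omega|+|\tau_M|$, and $\Omega$ is a set of cardinals with $1\in\Omega$, all other members infinite. It is an additive frame if moreover (6) $M$ is an additive $\theta$-model ($+,-,0\in\tau_M$, $(|M|,+,-,0)$ an abelian group, predicates interpreted as subgroups of powers of $M$, function symbols as homomorphisms, $|\tau_M|\le\theta$) and (7) for every $\varphi(\bar x_u)\in\mathscr L$, $\varphi(M)$ is a subgroup of ${}^uM$. An additive frame is additive$^+$ if $|M|\ge\lambda$. *)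

theory Defs
  imports "HOL-Library.FuncSet"
begin

unbundle cardinal_syntax

record ('m,'r,'f,'i) amodel =
  univ   :: "'m set"
  rels   :: "'r set"
  funs   :: "'f set"
  rarity :: "'r \<Rightarrow> 'i set"
  farity :: "'f \<Rightarrow> 'i set"
  rint   :: "'r \<Rightarrow> ('i \<Rightarrow> 'm) set"
  fint   :: "'f \<Rightarrow> ('i \<Rightarrow> 'm) \<Rightarrow> 'm"
  gadd   :: "'m \<Rightarrow> 'm \<Rightarrow> 'm"
  gneg   :: "'m \<Rightarrow> 'm"
  gzero  :: "'m"

text \<open>The vocabulary tau_M: the relation symbols, the function symbols and the three
  symbols plus, minus, zero (coded by 0,1,2).\<close>
definition vocab :: "('m,'r,'f,'i,'z) amodel_scheme \<Rightarrow> ('r + 'f + nat) set" where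
  "vocab M = Inl ` rels M \<union> Inr ` Inl ` funs M \<union> Inr ` Inr ` {0,1,2}"

definition pow :: "('m,'r,'f,'i,'z) amodel_scheme \<Rightarrow> 'd set \<Rightarrow> ('d \<Rightarrow> 'm) set" where
  "pow M D = PiE D (\<lambda>_. univ M)"

definition subgroup_pow :: "('m,'r,'f,'i,'z) amodel_scheme \<Rightarrow> 'd set \<Rightarrow> ('d \<Rightarrow> 'm) set \<Rightarrow> bool" where
  "subgroup_pow M D S \<longleftrightarrow> S \<subseteq> pow M D
     \<and> restrict (\<lambda>_. gzero M) D \<in> S
     \<and> (\<forall>a\<in>S. \<forall>b\<in>S. restrict (\<lambda>d. gadd M (a d) (b d)) D \<in> S)
     \<and> (\<forall>a\<in>S. restrict (\<lambda>d. gneg M (a d)) D \<in> S)"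

definition abelian_group_on :: "('m,'r,'f,'i,'z) amodel_scheme \<Rightarrow> bool" where
  "abelian_group_on M \<longleftrightarrow>
     gzero M \<in> univ M
   \<and> (\<forall>x\<in>univ M. \<forall>y\<in>univ M. gadd M x y \<in> univ M)
   \<and> (\<forall>x\<in>univ M. gneg M x \<in> univ M)
   \<and> (\<forall>x\<in>univ M. \<forall>y\<in>univ M. \<forall>z\<in>univ M. gadd M (gadd M x y) z = gadd M x (gadd M y z))
   \<and> (\<forall>x\<in>univ M. \<forall>y\<in>univ M. gadd M x y = gadd M y x)
   \<and> (\<forall>x\<in>univ M. gadd M x (gzero M) = x)
   \<and> (\<forall>x\<in>univ M. gadd M x (gneg M x) = gzero M)"

definition additive_model :: "('m,'r,'f,'i,'z) amodel_scheme \<Rightarrow> 'o rel \<Rightarrow> bool" where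
  "additive_model M th \<longleftrightarrow>
     abelian_group_on M
   \<and> (\<forall>R\<in>rels M. subgroup_pow M (rarity M R) (rint M R))
   \<and> (\<forall>F\<in>funs M. (\<forall>a\<in>pow M (farity M F). fint M F a \<in> univ M)
        \<and> (\<forall>a\<in>pow M (farity M F). \<forall>b\<in>pow M (farity M F).
             fint M F (restrict (\<lambda>d. gadd M (a d) (b d)) (farity M F))
               = gadd M (fint M F a) (fint M F b)))
   \<and> |vocab M| \<le>o th"

datatype ('f,'v,'i) tm =
    Var 'v
  | Zero
  | Plus "('f,'v,'i) tm" "('f,'v,'i) tm"
  | Minus "('f,'v,'i) tm"
  | App 'f "'i \<Rightarrow> ('f,'v,'i) tm"

datatype ('r,'f,'v,'i,'c) fm =
    Eq "('f,'v,'i) tm" "('f,'v,'i) tm"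
  | Rel 'r "'i \<Rightarrow> ('f,'v,'i) tm"
  | And "('r,'f,'v,'i,'c) fm" "('r,'f,'v,'i,'c) fm"
  | Conj "'i set" "'i \<Rightarrow> ('r,'f,'v,'i,'c) fm"
  | Disj "'i set" "'i \<Rightarrow> ('r,'f,'v,'i,'c) fm"
  | ExQ "'c rel" "'v set" "('r,'f,'v,'i,'c) fm"
  | AllQ "'c rel" "'v set" "('r,'f,'v,'i,'c) fm"

primrec eval :: "('m,'r,'f,'i,'z) amodel_scheme \<Rightarrow> ('v \<Rightarrow> 'm) \<Rightarrow> ('f,'v,'i) tm \<Rightarrow> 'm" where
  "eval M s (Var v) = s v"
| "eval M s Zero = gzero M"
| "eval M s (Plus t u) = gadd M (eval M s t) (eval M s u)"
| "eval M s (Minus t) = gneg M (eval M s t)"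
| "eval M s (App F ts) = fint M F (restrict (\<lambda>i. eval M s (ts i)) (farity M F))"

primrec tm_fv :: "('f,'v,'i) tm \<Rightarrow> 'v set" where
  "tm_fv (Var v) = {v}" | "tm_fv Zero = {}" | "tm_fv (Plus t u) = tm_fv t \<union> tm_fv u"
| "tm_fv (Minus t) = tm_fv t" | "tm_fv (App F ts) = (\<Union>i. tm_fv (ts i))"

primrec tm_funs :: "('f,'v,'i) tm \<Rightarrow> 'f set" where
  "tm_funs (Var v) = {}" | "tm_funs Zero = {}" | "tm_funs (Plus t u) = tm_funs t \<union> tm_funs u"
| "tm_funs (Minus t) = tm_funs t" | "tm_funs (App F ts) = insert F (\<Union>i. tm_funs (ts i))"

text \<open>Satisfaction. \<open>ExQ \<sigma> w \<phi>\<close> holds iff there are (at least) \<sigma> pairwise distinct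
  assignments to the variables in w (witnesses) satisfying \<phi>; \<open>AllQ \<sigma> w \<phi>\<close> is its dual:
  fewer than \<sigma> assignments to w fail \<phi> (for \<sigma> = 1 these are the usual quantifiers).\<close>
primrec sat :: "('m,'r,'f,'i,'z) amodel_scheme \<Rightarrow> ('r,'f,'v,'i,'c) fm \<Rightarrow> ('v \<Rightarrow> 'm) \<Rightarrow> bool" where
  "sat M (Eq t u) s = (eval M s t = eval M s u)"
| "sat M (Rel R ts) s = (restrict (\<lambda>i. eval M s (ts i)) (rarity M R) \<in> rint M R)"
| "sat M (And \<phi> \<psi>) s = (sat M \<phi> s \<and> sat M \<psi> s)"
| "sat M (Conj I \<phi>s) s = (\<forall>i\<in>I. sat M (\<phi>s i) s)"
| "sat M (Disj I \<phi>s) s = (\<exists>i\<in>I. sat M (\<phi>s i) s)"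
| "sat M (ExQ \<sigma> w \<phi>) s =
     (\<exists>W. W \<subseteq> pow M w \<and> \<sigma> \<le>o |W| \<and> (\<forall>g\<in>W. sat M \<phi> (override_on s g w)))"
| "sat M (AllQ \<sigma> w \<phi>) s =
     ( |{g \<in> pow M w. \<not> sat M \<phi> (override_on s g w)}| <o \<sigma>)"

primrec fm_fv :: "('r,'f,'v,'i,'c) fm \<Rightarrow> 'v set" where
  "fm_fv (Eq t u) = tm_fv t \<union> tm_fv u"
| "fm_fv (Rel R ts) = (\<Union>i. tm_fv (ts i))"
| "fm_fv (And \<phi> \<psi>) = fm_fv \<phi> \<union> fm_fv \<psi>"
| "fm_fv (Conj I \<phi>s) = (\<Union>i\<in>I. fm_fv (\<phi>s i))"
| "fm_fv (Disj I \<phi>s) = (\<Union>i\<in>I. fm_fv (\<phi>s i))"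
| "fm_fv (ExQ \<sigma> w \<phi>) = fm_fv \<phi> - w"
| "fm_fv (AllQ \<sigma> w \<phi>) = fm_fv \<phi> - w"

primrec fm_ok :: "('m,'r,'f,'i,'z) amodel_scheme \<Rightarrow> 'c rel set \<Rightarrow> ('r,'f,'v,'i,'c) fm \<Rightarrow> bool" where
  "fm_ok M Om (Eq t u) = (tm_funs t \<union> tm_funs u \<subseteq> funs M)"
| "fm_ok M Om (Rel R ts) = (R \<in> rels M \<and> (\<forall>i. tm_funs (ts i) \<subseteq> funs M))"
| "fm_ok M Om (And \<phi> \<psi>) = (fm_ok M Om \<phi> \<and> fm_ok M Om \<psi>)"
| "fm_ok M Om (Conj I \<phi>s) = (\<forall>i\<in>I. fm_ok M Om (\<phi>s i))"
| "fm_ok M Om (Disj I \<phi>s) = (\<forall>i\<in>I. fm_ok M Om (\<phi>s i))"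
| "fm_ok M Om (ExQ \<sigma> w \<phi>) = (\<sigma> \<in> Om \<and> fm_ok M Om \<phi>)"
| "fm_ok M Om (AllQ \<sigma> w \<phi>) = (\<sigma> \<in> Om \<and> fm_ok M Om \<phi>)"

text \<open>Ordinals \<open>\<epsilon> < \<theta>\<close> are represented by elements e of the field of the cardinal
  (well-order) th: \<open>\<epsilon>\<close> is the order type of \<open>underS th e\<close>.  A formula \<open>\<phi>(x\<^sub>\<epsilon>)\<close> is a
  triple (\<phi>, e, xs) where xs, injective on \<open>underS th e\<close>, is the sequence of free
  variables of length \<open>\<epsilon>\<close>.  \<open>\<^sup>\<epsilon>M\<close> is \<open>pow M (underS th e)\<close>.\<close>

definition asg :: "('o \<Rightarrow> 'v) \<Rightarrow> 'o set \<Rightarrow> ('o \<Rightarrow> 'm) \<Rightarrow> 'v \<Rightarrow> 'm" where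
  "asg xs D a = (\<lambda>v. if v \<in> xs ` D then a (the_inv_into D xs v) else undefined)"

definition fmext :: "('m,'r,'f,'i,'z) amodel_scheme \<Rightarrow> 'o rel
    \<Rightarrow> ('r,'f,'v,'i,'c) fm \<times> 'o \<times> ('o \<Rightarrow> 'v) \<Rightarrow> ('o \<Rightarrow> 'm) set" where
  "fmext M th F = (case F of (\<phi>, e, xs) \<Rightarrow>
      {a \<in> pow M (underS th e). sat M \<phi> (asg xs (underS th e) a)})"

definition is_phi_a :: "('m,'r,'f,'i,'z) amodel_scheme
    \<Rightarrow> (('r,'f,'v,'i,'c) fm \<times> 'o \<times> ('o \<Rightarrow> 'v)) set \<Rightarrow> 'o rel \<Rightarrow> 'o \<Rightarrow> ('o \<Rightarrow> 'v)
    \<Rightarrow> ('o \<Rightarrow> 'm) \<Rightarrow> ('r,'f,'v,'i,'c) fm \<Rightarrow> bool" where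
  "is_phi_a M L th e xs a \<phi> \<longleftrightarrow>
     (\<phi>, e, xs) \<in> L \<and> a \<in> fmext M th (\<phi>, e, xs)
   \<and> (\<forall>\<psi>. (\<psi>, e, xs) \<in> L \<and> a \<in> fmext M th (\<psi>, e, xs)
          \<longrightarrow> fmext M th (\<phi>, e, xs) \<subseteq> fmext M th (\<psi>, e, xs))"

definition frame :: "('m,'r,'f,'i,'z) amodel_scheme
    \<Rightarrow> (('r,'f,'v,'i,'c) fm \<times> 'o \<times> ('o \<Rightarrow> 'v)) set
    \<Rightarrow> 'l rel \<Rightarrow> 'k rel \<Rightarrow> 'o rel \<Rightarrow> 'c rel set \<Rightarrow> bool" where
  "frame M L lam kap th Om \<longleftrightarrow>
   \<comment> \<open>enough variables are available\<close>
     |Field th| \<le>o |UNIV :: 'v set|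
   \<comment> \<open>(2): formulas of L\<close>
   \<and> (\<forall>(\<phi>, e, xs)\<in>L. e \<in> Field th \<and> inj_on xs (underS th e)
        \<and> fm_fv \<phi> \<subseteq> xs ` underS th e \<and> fm_ok M Om \<phi>)
   \<comment> \<open>(2): closure under permuting variables\<close>
   \<and> (\<forall>\<phi> e xs \<pi>. (\<phi>, e, xs) \<in> L \<and> bij_betw \<pi> (underS th e) (underS th e)
        \<longrightarrow> (\<phi>, e, xs \<circ> \<pi>) \<in> L)
   \<comment> \<open>(2): closure under adding dummy variables\<close>
   \<and> (\<forall>\<phi> e xs e' ys. (\<phi>, e, xs) \<in> L \<and> e' \<in> Field th \<and> (e, e') \<in> th
        \<and> inj_on ys (underS th e') \<and> (\<forall>i\<in>underS th e. ys i = xs i)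
        \<longrightarrow> (\<phi>, e', ys) \<in> L)
   \<comment> \<open>(2): closure under finite conjunctions\<close>
   \<and> (\<forall>\<phi> \<psi> e xs. (\<phi>, e, xs) \<in> L \<and> (\<psi>, e, xs) \<in> L \<longrightarrow> (And \<phi> \<psi>, e, xs) \<in> L)
   \<comment> \<open>(3)\<close>
   \<and> (\<forall>e xs a. e \<in> Field th \<and> inj_on xs (underS th e) \<and> a \<in> pow M (underS th e)
        \<longrightarrow> (\<exists>\<phi>. is_phi_a M L th e xs a \<phi>))
   \<comment> \<open>(4)(a)\<close>
   \<and> (\<forall>e xs (\<Phi> :: 'k \<Rightarrow> ('r,'f,'v,'i,'c) fm). (\<forall>\<alpha>\<in>Field kap. (\<Phi> \<alpha>, e, xs) \<in> L) \<longrightarrow>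
        (\<exists>\<alpha> \<beta>. (\<alpha>, \<beta>) \<in> kap \<and> \<alpha> \<noteq> \<beta>
           \<and> fmext M th (\<Phi> \<beta>, e, xs) \<subseteq> fmext M th (\<Phi> \<alpha>, e, xs)))
   \<comment> \<open>(4)(b)\<close>
   \<and> (\<forall>e xs (\<Phi> :: 'l \<Rightarrow> 'l \<Rightarrow> ('r,'f,'v,'i,'c) fm).
        (\<forall>\<alpha> \<beta>. (\<alpha>, \<beta>) \<in> lam \<and> \<alpha> \<noteq> \<beta> \<longrightarrow> (\<Phi> \<alpha> \<beta>, e, xs) \<in> L) \<longrightarrow>
        (\<exists>\<alpha>1 \<alpha>2 \<alpha>3. (\<alpha>1, \<alpha>2) \<in> lam \<and> \<alpha>1 \<noteq> \<alpha>2 \<and> (\<alpha>2, \<alpha>3) \<in> lam \<and> \<alpha>2 \<noteq> \<alpha>3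
           \<and> fmext M th (\<Phi> \<alpha>1 \<alpha>3, e, xs) \<subseteq> fmext M th (\<Phi> \<alpha>1 \<alpha>2, e, xs)
           \<and> fmext M th (\<Phi> \<alpha>2 \<alpha>3, e, xs) \<subseteq> fmext M th (\<Phi> \<alpha>1 \<alpha>2, e, xs)))
   \<comment> \<open>(5)\<close>
   \<and> Card_order lam \<and> Cinfinite lam \<and> regularCard lam
   \<and> Card_order kap \<and> Cinfinite kap \<and> regularCard kap
   \<and> Card_order th
   \<and> kap \<le>o lam \<and> th \<le>o kap \<and> |Om| +c |vocab M| \<le>o th
   \<and> (\<forall>\<sigma>\<in>Om. Card_order \<sigma>)
   \<and> (\<forall>\<sigma>\<in>Om. \<forall>\<sigma>'\<in>Om. \<sigma> =o \<sigma>' \<longrightarrow> \<sigma> = \<sigma>')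
   \<and> (\<exists>\<sigma>\<in>Om. card (Field \<sigma>) = 1)
   \<and> (\<forall>\<sigma>\<in>Om. card (Field \<sigma>) = 1 \<or> infinite (Field \<sigma>))"

definition additive_frame where
  "additive_frame M L lam kap th Om \<longleftrightarrow>
     frame M L lam kap th Om
   \<and> additive_model M th
   \<and> (\<forall>(\<phi>, e, xs)\<in>L. subgroup_pow M (underS th e) (fmext M th (\<phi>, e, xs)))"

definition additive_plus_frame where
  "additive_plus_frame M L lam kap th Om \<longleftrightarrow>
     additive_frame M L lam kap th Om \<and> lam \<le>o |univ M|"

end

theory Submission
  imports Defs
begin

text \<open>For \<open>\<epsilon> = 1\<close> every \<open>\<phi>\<^sub>a(M)\<close> lies in \<open>\<^sup>1M\<close>, which has the size of \<open>M\<close>; this gives one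
  direction.  Conversely, suppose \<open>|M| \<ge> \<lambda>\<close> but all \<open>\<phi>\<^sub>a(M)\<close>, \<open>a \<in> \<^sup>\<epsilon>M\<close>, have size \<open>< \<lambda>\<close>.
  Since \<open>|\<^sup>\<epsilon>M| \<ge> \<lambda>\<close> and \<open>\<lambda>\<close> is regular, we can choose \<open>a\<^sub>\<beta> \<in> \<^sup>\<epsilon>M\<close> for \<open>\<beta> < \<lambda>\<close> with
  \<open>a\<^sub>\<beta> \<notin> \<phi>\<^bsub>a\<^sub>\<gamma>\<^esub>(M)\<close> for all \<open>\<gamma> < \<beta>\<close>.  Item (4)(b), applied to \<open>\<phi>\<^sub>\<alpha>\<^sub>,\<^sub>\<beta> = \<phi>\<^bsub>a\<^sub>\<beta>\<^esub>\<close>, yields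
  \<open>\<alpha>\<^sub>2 < \<alpha>\<^sub>3\<close> with \<open>\<phi>\<^bsub>a\<^sub>\<alpha>\<^sub>3\<^esub>(M) \<subseteq> \<phi>\<^bsub>a\<^sub>\<alpha>\<^sub>2\<^esub>(M)\<close>, so \<open>a\<^sub>\<alpha>\<^sub>3 \<in> \<phi>\<^bsub>a\<^sub>\<alpha>\<^sub>2\<^esub>(M)\<close>, a contradiction.\<close>

lemma bij_betw_pow_singleton: "bij_betw (\<lambda>g. g d) (pow M {d}) (univ M)"
  by (rule bij_betw_byWitness[where f' = "\<lambda>x. \<lambda>_\<in>{d}. x"])
     (auto simp: pow_def PiE_iff extensional_def fun_eq_iff split: if_splits)

lemma card_of_pow_singleton: "|pow M {d}| =o |univ M|"
  using card_of_ordIso bij_betw_pow_singleton by metis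

lemma card_of_univ_le_pow:
  assumes "d \<in> D"
  shows "|univ M| \<le>o |pow M D|"
proof -
  have "inj_on (\<lambda>x. \<lambda>_\<in>D. x) (univ M)"
    using assms by (intro inj_onI) (metis restrict_apply')
  moreover have "(\<lambda>x. \<lambda>_\<in>D. x) ` univ M \<subseteq> pow M D"
    unfolding pow_def by auto
  ultimately show ?thesis
    using card_of_ordLeq[of "univ M" "pow M D"] by blast
qed

lemma fmext_subset_pow: "fmext M th (\<phi>, e, xs) \<subseteq> pow M (underS th e)"
  unfolding fmext_def by auto

lemma (in wo_rel) underS_singleton_exists:
  assumes "a \<in> Field r" "b \<in> Field r" "a \<noteq> b"
  shows "\<exists>e\<in>Field r. \<exists>d. underS e = {d}"
proof -
  define e0 where "e0 = minim (Field r)"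
  define e1 where "e1 = minim (Field r - {e0})"
  have e1: "e1 \<in> Field r - {e0}"
    using assms unfolding e1_def by (intro minim_in) auto
  have "underS e1 = {e0}"
  proof (intro equalityI subsetI)
    fix x
    assume x: "x \<in> underS e1"
    show "x \<in> {e0}"
    proof (rule ccontr)
      assume "x \<notin> {e0}"
      then have "(e1, x) \<in> r"
        using x unfolding e1_def by (intro minim_least) (auto simp: underS_def Field_def)
      with x show False
        using ANTISYM unfolding underS_def antisym_def by blast
    qed
  next
    fix x
    assume "x \<in> {e0}"
    then show "x \<in> underS e1"
      using e1 minim_least[of "Field r" e1] unfolding e0_def underS_def by auto
  qed
  then show ?thesis
    using e1 by blast
qed

lemma Card_order_Field_distinct:
  assumes "Card_order r" "|A| \<le>o r" "a \<in> A" "b \<in> A" "a \<noteq> b"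
  obtains x y where "x \<in> Field r" "y \<in> Field r" "x \<noteq> y"
proof -
  have "|A| \<le>o |Field r|"
    using ordLeq_ordIso_trans[OF assms(2) ordIso_symmetric[OF card_of_Field_ordIso[OF assms(1)]]] .
  then obtain g where "inj_on g A" "g ` A \<subseteq> Field r"
    using card_of_ordLeq[of A "Field r"] by blast
  then show thesis
    using that assms(3-5) by (metis image_subset_iff inj_onD)
qed

lemma regularCard_free_sequence:
  fixes r :: "'a rel" and S :: "'b \<Rightarrow> 'b set"
  assumes r: "Card_order r" "Cinfinite r" "regularCard r"
    and large: "r \<le>o |P|" and small: "\<And>x. |S x| <o r"
  obtains f where "\<And>b. b \<in> Field r \<Longrightarrow> f b \<in> P \<and> f b \<notin> (\<Union>c\<in>underS r b. S (f c))"
proof -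
  have wo: "wo_rel r"
    using r(1) card_order_on_well_order_on wo_rel_def by blast
  define H where "H g b = (SOME x. x \<in> P \<and> x \<notin> (\<Union>c\<in>underS r b. S (g c)))"
    for g :: "'a \<Rightarrow> 'b" and b
  have "wo_rel.adm_wo r H"
    unfolding wo_rel.adm_wo_def[OF wo]
  proof (intro allI impI)
    fix g h :: "'a \<Rightarrow> 'b" and b
    assume "\<forall>c\<in>underS r b. g c = h c"
    then have "(\<Union>c\<in>underS r b. S (g c)) = (\<Union>c\<in>underS r b. S (h c))"
      by auto
    then show "H g b = H h b"
      unfolding H_def by (simp only:)
  qed
  then have worec_eq: "wo_rel.worec r H = H (wo_rel.worec r H)"
    by (rule wo_rel.worec_fixpoint[OF wo])
  define f where "f = wo_rel.worec r H"
  have "f b \<in> P \<and> f b \<notin> (\<Union>c\<in>underS r b. S (f c))" if b: "b \<in> Field r" for b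
  proof -
    have "|\<Union>c\<in>underS r b. S (f c)| <o r"
      using small
      by (intro card_of_UNION_ordLess_infinite_Field_regularCard[OF r(3) r(2) card_of_underS[OF r(1) b]]
          ballI)
    then have "\<not> P \<subseteq> (\<Union>c\<in>underS r b. S (f c))"
      using ordLeq_ordLess_trans[OF ordLeq_transitive[OF large card_of_mono1]] ordLess_irreflexive
      by metis
    then have "\<exists>x. x \<in> P \<and> x \<notin> (\<Union>c\<in>underS r b. S (f c))"
      by blast
    then have "H f b \<in> P \<and> H f b \<notin> (\<Union>c\<in>underS r b. S (f c))"
      unfolding H_def by (rule someI_ex)
    moreover have "f b = H f b"
      unfolding f_def by (rule fun_cong[OF worec_eq])
    ultimately show ?thesis
      by argo
  qed
  then show thesis
    using that by blast
qed

lemma frame_vars_ordLeq: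
  fixes L :: "(('r,'f,'v,'i,'c) fm \<times> 'o \<times> ('o \<Rightarrow> 'v)) set"
  assumes "frame M L lam kap th Om"
  shows "|Field th| \<le>o |UNIV :: 'v set|"
  using assms unfolding frame_def by blast

lemma frame_phi_a_exists:
  assumes "frame M L lam kap th Om"
    and "e \<in> Field th" "inj_on xs (underS th e)" "a \<in> pow M (underS th e)"
  shows "\<exists>\<phi>. is_phi_a M L th e xs a \<phi>"
  using assms unfolding frame_def by blast

lemma frame_indiscernible:
  fixes \<Phi> :: "'l \<Rightarrow> 'l \<Rightarrow> ('r,'f,'v,'i,'c) fm" and lam :: "'l rel"
  assumes "frame M L lam kap th Om"
    and "\<And>\<alpha> \<beta>. (\<alpha>, \<beta>) \<in> lam \<Longrightarrow> \<alpha> \<noteq> \<beta> \<Longrightarrow> (\<Phi> \<alpha> \<beta>, e, xs) \<in> L"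
  shows "\<exists>\<alpha>1 \<alpha>2 \<alpha>3. (\<alpha>1, \<alpha>2) \<in> lam \<and> \<alpha>1 \<noteq> \<alpha>2 \<and> (\<alpha>2, \<alpha>3) \<in> lam \<and> \<alpha>2 \<noteq> \<alpha>3
           \<and> fmext M th (\<Phi> \<alpha>1 \<alpha>3, e, xs) \<subseteq> fmext M th (\<Phi> \<alpha>1 \<alpha>2, e, xs)
           \<and> fmext M th (\<Phi> \<alpha>2 \<alpha>3, e, xs) \<subseteq> fmext M th (\<Phi> \<alpha>1 \<alpha>2, e, xs)"
proof -
  have "\<forall>e xs (\<Phi> :: 'l \<Rightarrow> 'l \<Rightarrow> ('r,'f,'v,'i,'c) fm).
        (\<forall>\<alpha> \<beta>. (\<alpha>, \<beta>) \<in> lam \<and> \<alpha> \<noteq> \<beta> \<longrightarrow> (\<Phi> \<alpha> \<beta>, e, xs) \<in> L) \<longrightarrow>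
        (\<exists>\<alpha>1 \<alpha>2 \<alpha>3. (\<alpha>1, \<alpha>2) \<in> lam \<and> \<alpha>1 \<noteq> \<alpha>2 \<and> (\<alpha>2, \<alpha>3) \<in> lam \<and> \<alpha>2 \<noteq> \<alpha>3
           \<and> fmext M th (\<Phi> \<alpha>1 \<alpha>3, e, xs) \<subseteq> fmext M th (\<Phi> \<alpha>1 \<alpha>2, e, xs)
           \<and> fmext M th (\<Phi> \<alpha>2 \<alpha>3, e, xs) \<subseteq> fmext M th (\<Phi> \<alpha>1 \<alpha>2, e, xs))"
    using assms(1) unfolding frame_def by blast
  then show ?thesis
    using assms(2) by blast
qed

lemma frame_regular:
  assumes "frame M L lam kap th Om"
  shows "Card_order lam" "Cinfinite lam" "regularCard lam"
  using assms unfolding frame_def by blast+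

lemma frame_large_phi_a:
  fixes M :: "('m,'r,'f,'i,'z) amodel_scheme"
    and L :: "(('r,'f,'v,'i,'c) fm \<times> 'o \<times> ('o \<Rightarrow> 'v)) set"
    and lam :: "'l rel" and kap :: "'k rel" and th :: "'o rel" and Om :: "'c rel set"
  assumes fr: "frame M L lam kap th Om" and large: "lam \<le>o |univ M|"
    and e: "e \<in> Field th" "underS th e \<noteq> {}"
  shows "\<exists>a\<in>pow M (underS th e). \<exists>xs \<phi>. is_phi_a M L th e xs a \<phi>
           \<and> lam \<le>o |fmext M th (\<phi>, e, xs)|"
proof (rule ccontr)
  assume all_small: "\<not> ?thesis"
  define D where "D = underS th e"
  have wo_lam: "Well_order lam"
    using frame_regular(1)[OF fr] by (rule card_order_on_well_order_on)
  obtain xs :: "'o \<Rightarrow> 'v" where "inj_on xs (Field th)"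
    using frame_vars_ordLeq[OF fr] unfolding card_of_ordLeq[symmetric] by blast
  then have xs: "inj_on xs D"
    unfolding D_def by (rule inj_on_subset) (auto simp: underS_def Field_def)
  have "\<exists>\<phi>. is_phi_a M L th e xs a \<phi>" if "a \<in> pow M D" for a
    using frame_phi_a_exists[OF fr e(1)] xs that unfolding D_def .
  then obtain ph where ph: "\<And>a. a \<in> pow M D \<Longrightarrow> is_phi_a M L th e xs a (ph a)"
    by metis
  define S where "S a = (if a \<in> pow M D then fmext M th (ph a, e, xs) else {})" for a
  have small: "|S a| <o lam" for a
  proof (cases "a \<in> pow M D")
    case True
    then have "\<not> lam \<le>o |fmext M th (ph a, e, xs)|"
      using all_small ph unfolding D_def by blast
    then have "|fmext M th (ph a, e, xs)| <o lam"
      by (simp only: not_ordLeq_iff_ordLess[OF card_of_Well_order wo_lam])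
    with True show ?thesis
      unfolding S_def by simp
  next
    case False
    have "|{} :: ('o \<Rightarrow> 'm) set| <o lam"
      using frame_regular(2)[OF fr]
      by (intro Cfinite_ordLess_Cinfinite) (simp_all add: cfinite_def Field_card_of card_of_card_order_on)
    then show ?thesis
      using False unfolding S_def by simp
  qed
  obtain d where "d \<in> D"
    using e(2) unfolding D_def by blast
  then have pow_large: "lam \<le>o |pow M D|"
    by (rule ordLeq_transitive[OF large card_of_univ_le_pow])
  obtain f where f: "\<And>b. b \<in> Field lam \<Longrightarrow>
      f b \<in> pow M D \<and> f b \<notin> (\<Union>c\<in>underS lam b. S (f c))"
    using regularCard_free_sequence[where S = S, OF frame_regular[OF fr] pow_large small] by blast
  have in_L: "(ph (f \<beta>), e, xs) \<in> L" if "(\<alpha>, \<beta>) \<in> lam" "\<alpha> \<noteq> \<beta>" for \<alpha> \<beta>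
  proof -
    have "f \<beta> \<in> pow M D"
      using f FieldI2[OF that(1)] by blast
    then show ?thesis
      using ph unfolding is_phi_a_def by blast
  qed
  obtain \<alpha>2 \<alpha>3 where \<alpha>: "(\<alpha>2, \<alpha>3) \<in> lam" "\<alpha>2 \<noteq> \<alpha>3"
      and sub: "fmext M th (ph (f \<alpha>3), e, xs) \<subseteq> fmext M th (ph (f \<alpha>2), e, xs)"
    using frame_indiscernible[OF fr, of "\<lambda>_ \<beta>. ph (f \<beta>)"] in_L by blast
  have "\<alpha>2 \<in> Field lam" "\<alpha>3 \<in> Field lam" "\<alpha>2 \<in> underS lam \<alpha>3"
    using \<alpha> unfolding Field_def underS_def by auto
  then have "f \<alpha>2 \<in> pow M D" "f \<alpha>3 \<in> pow M D" and fresh: "f \<alpha>3 \<notin> S (f \<alpha>2)"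
    using f by blast+
  have "f \<alpha>3 \<in> S (f \<alpha>3)"
    using ph[OF \<open>f \<alpha>3 \<in> pow M D\<close>] \<open>f \<alpha>3 \<in> pow M D\<close> unfolding S_def is_phi_a_def by simp
  also have "S (f \<alpha>3) \<subseteq> S (f \<alpha>2)"
    using sub \<open>f \<alpha>2 \<in> pow M D\<close> \<open>f \<alpha>3 \<in> pow M D\<close> unfolding S_def by simp
  finally show False
    using fresh by contradiction
qed

lemma frame_singleton_underS:
  assumes fr: "frame M L lam kap th Om"
  obtains e d where "e \<in> Field th" "underS th e = {d}"
proof -
  have th: "Card_order th"
    using fr unfolding frame_def by blast
  have "|Om| +c |vocab M| \<le>o th"
    using fr unfolding frame_def by blast
  then have vocab: "|vocab M| \<le>o th"
    by (rule ordLeq_transitive[OF ordLeq_csum2[OF card_of_Card_order]])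
  obtain x y where "x \<in> Field th" "y \<in> Field th" "x \<noteq> y"
    by (rule Card_order_Field_distinct[OF th vocab, of "Inr (Inr 0)" "Inr (Inr 1)"])
       (auto simp: vocab_def)
  then have "\<exists>e\<in>Field th. \<exists>d. underS th e = {d}"
    by (rule wo_rel.underS_singleton_exists[rotated])
       (use th card_order_on_well_order_on wo_rel_def in blast)
  then show thesis
    using that by blast
qed

theorem lemma3p3:
  fixes M :: "('m,'r,'f,'i,'z) amodel_scheme"
    and L :: "(('r,'f,'v,'i,'c) fm \<times> 'o \<times> ('o \<Rightarrow> 'v)) set"
    and lam :: "'l rel" and kap :: "'k rel" and th :: "'o rel" and Om :: "'c rel set"
  assumes "additive_frame M L lam kap th Om"
  shows "additive_plus_frame M L lam kap th Om \<longleftrightarrow>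
    (\<forall>e\<in>Field th. underS th e \<noteq> {} \<longrightarrow>
       (\<exists>a\<in>pow M (underS th e). \<exists>xs \<phi>. is_phi_a M L th e xs a \<phi>
           \<and> lam \<le>o |fmext M th (\<phi>, e, xs)| ))"
proof
  have fr: "frame M L lam kap th Om"
    using assms unfolding additive_frame_def by blast
  show "\<forall>e\<in>Field th. underS th e \<noteq> {} \<longrightarrow> (\<exists>a\<in>pow M (underS th e). \<exists>xs \<phi>.
      is_phi_a M L th e xs a \<phi> \<and> lam \<le>o |fmext M th (\<phi>, e, xs)| )"
    if "additive_plus_frame M L lam kap th Om"
  proof (intro ballI impI)
    fix e
    assume "e \<in> Field th" "underS th e \<noteq> {}"
    moreover have "lam \<le>o |univ M|"
      using that unfolding additive_plus_frame_def by blast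
    ultimately show "\<exists>a\<in>pow M (underS th e). \<exists>xs \<phi>.
        is_phi_a M L th e xs a \<phi> \<and> lam \<le>o |fmext M th (\<phi>, e, xs)|"
      using frame_large_phi_a[OF fr] by blast
  qed
  assume large_phi: "\<forall>e\<in>Field th. underS th e \<noteq> {} \<longrightarrow> (\<exists>a\<in>pow M (underS th e). \<exists>xs \<phi>.
      is_phi_a M L th e xs a \<phi> \<and> lam \<le>o |fmext M th (\<phi>, e, xs)| )"
  obtain e d where e: "e \<in> Field th" "underS th e = {d}"
    using frame_singleton_underS[OF fr] .
  then have "underS th e \<noteq> {}"
    by simp
  with large_phi e(1) obtain xs :: "'o \<Rightarrow> 'v" and \<phi> :: "('r,'f,'v,'i,'c) fm"
    where "lam \<le>o |fmext M th (\<phi>, e, xs)|"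
    by blast
  also have "|fmext M th (\<phi>, e, xs)| \<le>o |pow M {d}|"
    using card_of_mono1[OF fmext_subset_pow[of M th \<phi> e xs]] unfolding e(2) .
  also have "|pow M {d}| =o |univ M|"
    by (rule card_of_pow_singleton)
  finally show "additive_plus_frame M L lam kap th Om"
    using assms unfolding additive_plus_frame_def by blast
qed

end
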